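(* Let $n\ge1$, $N=2^n$, and let $S_m^*$ ($0\le m\le n-1$) be the maps defined below. For a finitely supported $H:\{0,1\}^n\times\{0,1\}^n\times\mathbb{Z}\to\mathbb{R}$, regarded as a function on $\{0,1\}^n\times\{0,1\}^0\times\{0,1\}^n\times\{0,1\}^0\times\mathbb{Z}$, the function $P=S_0^*\circ S_1^*\circ\cdots\circ S_{n-1}^*(H)$ on $\{0,1\}^0\times\{0,1\}^n\times\{0,1\}^0\times\{0,1\}^n\times\mathbb{Z}$ satisfies, for all $\mathbf v_1,\mathbf v_2\in\{0,1\}^n$ and $e\in\mathbb{Z}$, $$P(\emptyset\mid\mathbf v_1\mid\emptyset\mid\mathbf v_2\mid e)=\sum_{\mathbf s_1\in\{0,1\}^n}\sum_{\mathbf s_2\in\{0,1\}^n}H\big(\mathbf s_1\mid\mathbf s_2\mid e-l^n_{\lambda(\mathbf s_1)}(\mathbf v_1)-l^n_{\lambda(\mathbf s_2)}(\mathbf v_2)\big).$$ Equivalently, $(x,y,z)\mapsto P(\emptyset\mid\lambda^{-1}(x)\mid\emptyset\mid\lambda^{-1}(y)\mid z)$ is the adjoint of the linear map $f\mapsto\tilde f$, $\tilde f(\mathbf s_1\mid\mathbf s_2\mid d)=\sum_{\mathbf u_1,\mathbf u_2\in\{0,1\}^n}f\big(\lambda(\mathbf u_1),\lambda(\mathbf u_2),l^n_{\lambda(\mathbf s_1)}(\mathbf u_1)+l^n_{\lambda(\mathbf s_2)}(\mathbf u_2)+d\big)$ (the 3D discrete Radon transform of planes), acting on finitely supported $f: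\{0,\dots,N-1\}^2\times\mathbb{Z}\to\mathbb{R}$.
   Context: Bit vectors: for $\mathbf u=(u_0,\dots,u_{k-1})\in\{0,1\}^k$, $\lambda(\mathbf u)=\sum_{i=0}^{k-1}u_i2^i$ (first entry least significant), $\lambda(\emptyset)=0$; $(a,\boldsymbol\sigma)$ denotes the vector with first entry $a$ followed by the entries of $\boldsymbol\sigma$. Discrete lines: $l^0_s(\emptyset)=0$ and $l^k_s(u_0,\dots,u_{k-1})=l^{k-1}_{\lfloor s/2\rfloor}(u_0,\dots,u_{k-2})+u_{k-1}\lfloor(s+1)/2\rfloor$ for $k\ge1$, $s\ge0$. For $0\le m\le n-1$ and finitely supported $H$ on $\{0,1\}^{m+1}\times\{0,1\}^{n-m-1}\times\{0,1\}^{m+1}\times\{0,1\}^{n-m-1}\times\mathbb{Z}$, $S_m^*H$ is the function on $\{0,1\}^{m}\times\{0,1\}^{n-m}\times\{0,1\}^{m}\times\{0,1\}^{n-m}\times\mathbb{Z}$ given by $(S_m^*H)(\boldsymbol\sigma_1\mid(w_1,\mathbf v_1)\mid\boldsymbol\sigma_2\mid(w_2,\mathbf v_2)\mid d)=\sum_{a,b\in\{0,1\}}H((a,\boldsymbol\sigma_1)\mid\mathbf v_1\mid(b,\boldsymbol\sigma_2)\mid\mathbf v_2\mid d-w_1(a+\lambda(\boldsymbol\sigma_1))-w_2(b+\lambda(\boldsymbol\sigma_2)))$. *)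

theory Defs
  imports Complex_Main
begin

text \<open>Bit vectors are lists of booleans; the first entry is the least significant bit.\<close>

fun lam :: "bool list \<Rightarrow> nat" where
  "lam [] = 0"
| "lam (a # u) = of_bool a + 2 * lam u"

text \<open>Discrete lines. The recursion peels off the LAST entry of the vector, so we
recurse on the reversed list: dline_rev s (rev u) is l^k_s(u).\<close>

fun dline_rev :: "nat \<Rightarrow> bool list \<Rightarrow> int" where
  "dline_rev s [] = 0"
| "dline_rev s (u # us) = dline_rev (s div 2) us + of_bool u * int ((s + 1) div 2)"

definition dline :: "nat \<Rightarrow> bool list \<Rightarrow> int" where
  "dline s u = dline_rev s (rev u)"

type_synonym fun5 = "bool list \<Rightarrow> bool list \<Rightarrow> bool list \<Rightarrow> bool list \<Rightarrow> int \<Rightarrow> real"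

text \<open>The map S_m^* (for ambient dimension n): input functions live on
{0,1}^(m+1) x {0,1}^(n-m-1) x {0,1}^(m+1) x {0,1}^(n-m-1) x Z, outputs on
{0,1}^m x {0,1}^(n-m) x {0,1}^m x {0,1}^(n-m) x Z; outside that domain the output is 0.
The second/fourth argument (w, v) is split as w = hd, v = tl.\<close>

definition S_star :: "nat \<Rightarrow> nat \<Rightarrow> fun5 \<Rightarrow> fun5" where
  "S_star n m H = (\<lambda>\<sigma>1 wv1 \<sigma>2 wv2 d.
     if m < n \<and> length \<sigma>1 = m \<and> length \<sigma>2 = m \<and> length wv1 = n - m \<and> length wv2 = n - m
     then (\<Sum>a\<in>(UNIV::bool set). \<Sum>b\<in>(UNIV::bool set).
             H (a # \<sigma>1) (tl wv1) (b # \<sigma>2) (tl wv2)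
               (d - of_bool (hd wv1) * (of_bool a + int (lam \<sigma>1))
                  - of_bool (hd wv2) * (of_bool b + int (lam \<sigma>2))))
     else 0)"

definition S_comp :: "nat \<Rightarrow> fun5 \<Rightarrow> fun5" where
  "S_comp n H = foldr (S_star n) [0..<n] H"

definition lift5 :: "(bool list \<Rightarrow> bool list \<Rightarrow> int \<Rightarrow> real) \<Rightarrow> fun5" where
  "lift5 H = (\<lambda>s1 v1 s2 v2 d. if v1 = [] \<and> v2 = [] then H s1 s2 d else 0)"

end

theory Submission
  imports Defs
begin

text \<open>Unrolling the recursion of the discrete line from the front, \<open>l_s(w, u)\<close> is
  \<open>l_s(u)\<close> plus \<open>w \<lfloor>(\<lfloor>s / 2^|u|\<rfloor> + 1) / 2\<rfloor>\<close>. If the top bits of \<open>s\<close> are \<open>(a, \<sigma>)\<close>, that last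
  factor is \<open>a + \<lambda>(\<sigma>)\<close>, exactly the shift applied by \<open>S\<^sub>m\<^sup>*\<close>. So by downward induction on
  \<open>m\<close>, the composite \<open>S\<^sub>m\<^sup>* \<circ> \<dots> \<circ> S\<^sub>n\<^sub>-\<^sub>1\<^sup>*\<close> at \<open>(\<sigma>\<^sub>1 | u\<^sub>1 | \<sigma>\<^sub>2 | u\<^sub>2 | d)\<close> is the sum of
  \<open>H(r\<^sub>1\<sigma>\<^sub>1 | r\<^sub>2\<sigma>\<^sub>2 | d - l(u\<^sub>1) - l(u\<^sub>2))\<close> over all \<open>r\<^sub>1, r\<^sub>2\<close> of length \<open>n - m\<close>, the lines
  having slopes \<open>\<lambda>(r\<^sub>i\<sigma>\<^sub>i)\<close>; the case \<open>m = 0\<close> is the theorem.\<close>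

lemma lam_append: "lam (xs @ ys) = lam xs + 2 ^ length xs * lam ys"
  by (induction xs) auto

lemma lam_less_power: "lam xs < 2 ^ length xs"
  by (induction xs) auto

lemma dline_rev_snoc:
  "dline_rev s (xs @ [w]) = dline_rev s xs + of_bool w * int ((s div 2 ^ length xs + 1) div 2)"
proof (induction xs arbitrary: s)
  case Nil
  then show ?case by simp
next
  case (Cons x xs)
  have "s div 2 div 2 ^ length xs = s div 2 ^ length (x # xs)"
    by (simp add: div_mult2_eq)
  with Cons show ?case by simp
qed

lemma dline_Cons:
  "dline s (w # u) = dline s u + of_bool w * int ((s div 2 ^ length u + 1) div 2)"
  by (simp add: dline_def dline_rev_snoc)

lemma dline_Cons_lam_append:
  assumes "length r = length u"
  shows "dline (lam (r @ a # \<sigma>)) (w # u) =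
    dline (lam (r @ a # \<sigma>)) u + of_bool w * (of_bool a + int (lam \<sigma>))"
proof -
  have "lam (r @ a # \<sigma>) div 2 ^ length u = lam (a # \<sigma>)"
    using assms lam_less_power[of r] by (simp add: lam_append)
  then have "(lam (r @ a # \<sigma>) div 2 ^ length u + 1) div 2 = of_bool a + lam \<sigma>"
    by (cases a) auto
  then show ?thesis
    by (simp add: dline_Cons)
qed

lemma sum_lists_length_Suc_snoc:
  "(\<Sum>r\<in>{r::bool list. length r = Suc m}. f r) = (\<Sum>a\<in>UNIV. \<Sum>r\<in>{r. length r = m}. f (r @ [a]))"
proof -
  have image: "{r::bool list. length r = Suc m} = (\<lambda>(a, r). r @ [a]) ` (UNIV \<times> {r. length r = m})"
    by (auto simp: image_iff) (metis append_butlast_last_id length_butlast diff_Suc_1 list.size(3) nat.distinct(1))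
  have "inj_on (\<lambda>(a, r). r @ [a]) (UNIV \<times> {r::bool list. length r = m})"
    by (auto simp: inj_on_def)
  then show ?thesis
    unfolding image by (simp add: sum.reindex sum.cartesian_product case_prod_unfold)
qed

lemma foldr_S_star_lift5:
  assumes "m + k = n" "length \<sigma>1 = k" "length \<sigma>2 = k" "length u1 = m" "length u2 = m"
  shows "foldr (S_star n) [k..<n] (lift5 H) \<sigma>1 u1 \<sigma>2 u2 d =
    (\<Sum>r1\<in>{r. length r = m}. \<Sum>r2\<in>{r. length r = m}.
       H (r1 @ \<sigma>1) (r2 @ \<sigma>2) (d - dline (lam (r1 @ \<sigma>1)) u1 - dline (lam (r2 @ \<sigma>2)) u2))"
  using assms
proof (induction m arbitrary: k \<sigma>1 \<sigma>2 u1 u2 d)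
  case 0
  then show ?case by (simp add: lift5_def dline_def)
next
  case (Suc m)
  obtain w1 u1' where u1: "u1 = w1 # u1'" "length u1' = m"
    using Suc.prems by (cases u1) auto
  obtain w2 u2' where u2: "u2 = w2 # u2'" "length u2' = m"
    using Suc.prems by (cases u2) auto
  let ?d = "\<lambda>a b. d - of_bool w1 * (of_bool a + int (lam \<sigma>1)) - of_bool w2 * (of_bool b + int (lam \<sigma>2))"
  let ?F = "\<lambda>a r1 b r2. H (r1 @ a # \<sigma>1) (r2 @ b # \<sigma>2)
    (?d a b - dline (lam (r1 @ a # \<sigma>1)) u1' - dline (lam (r2 @ b # \<sigma>2)) u2')"
  have "[k..<n] = k # [Suc k..<n]"
    using Suc.prems by (simp add: upt_conv_Cons)
  then have "foldr (S_star n) [k..<n] (lift5 H) \<sigma>1 u1 \<sigma>2 u2 d =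
      (\<Sum>a\<in>UNIV. \<Sum>b\<in>UNIV. foldr (S_star n) [Suc k..<n] (lift5 H) (a # \<sigma>1) u1' (b # \<sigma>2) u2' (?d a b))"
    using Suc.prems u1 u2 by (simp add: S_star_def)
  also have "\<dots> = (\<Sum>a\<in>UNIV. \<Sum>b\<in>UNIV. \<Sum>r1\<in>{r. length r = m}. \<Sum>r2\<in>{r. length r = m}. ?F a r1 b r2)"
    using Suc.IH[of "Suc k"] Suc.prems u1 u2 by simp
  also have "\<dots> = (\<Sum>a\<in>UNIV. \<Sum>r1\<in>{r. length r = m}. \<Sum>b\<in>UNIV. \<Sum>r2\<in>{r. length r = m}. ?F a r1 b r2)"
    by (intro sum.cong refl sum.swap)
  also have "\<dots> = (\<Sum>a\<in>UNIV. \<Sum>r1\<in>{r. length r = m}. \<Sum>b\<in>UNIV. \<Sum>r2\<in>{r. length r = m}.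
      H (r1 @ a # \<sigma>1) (r2 @ b # \<sigma>2)
        (d - dline (lam (r1 @ a # \<sigma>1)) u1 - dline (lam (r2 @ b # \<sigma>2)) u2))"
    using u1 u2 by (intro sum.cong refl) (simp add: dline_Cons_lam_append algebra_simps)
  also have "\<dots> = (\<Sum>r1\<in>{r. length r = Suc m}. \<Sum>r2\<in>{r. length r = Suc m}.
      H (r1 @ \<sigma>1) (r2 @ \<sigma>2) (d - dline (lam (r1 @ \<sigma>1)) u1 - dline (lam (r2 @ \<sigma>2)) u2))"
    by (simp add: sum_lists_length_Suc_snoc)
  finally show ?case .
qed

theorem mainTheorem5:
  fixes n :: nat and v1 v2 :: "bool list" and e :: int and H :: "bool list \<Rightarrow> bool list \<Rightarrow> int \<Rightarrow> real"
  assumes "n \<ge> 1"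
    and "finite {(s1, s2, d). length s1 = n \<and> length s2 = n \<and> H s1 s2 d \<noteq> 0}"
    and "length v1 = n" and "length v2 = n"
  shows "S_comp n (lift5 H) [] v1 [] v2 e =
    (\<Sum>s1\<in>{s. length s = n}. \<Sum>s2\<in>{s. length s = n}.
        H s1 s2 (e - dline (lam s1) v1 - dline (lam s2) v2))"
  using foldr_S_star_lift5[of n 0 n "[]" "[]" v1 v2 H e] assms(3,4)
  by (simp add: S_comp_def)

end
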